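(* Let $n\ge2$ and let $f(u)=\sum_{l=0}^\infty a_l(u-u_0)^l$ be a power series in the polar $n$-complex variable $u$, with polar $n$-complex coefficients $a_l$ and center $u_0$, converging absolutely on an open set $U\subseteq\mathbb{R}^n$ (identifying $u$ with $(x_0,\dots,x_{n-1})$). Write $f(u)=\sum_{k=0}^{n-1}h_kP_k(x_0,\dots,x_{n-1})$ with real functions $P_k$. Then on $U$, for every $k\in\{0,\dots,n-1\}$, $$\frac{\partial P_k}{\partial x_0}=\frac{\partial P_{k+1}}{\partial x_1}=\cdots=\frac{\partial P_{n-1}}{\partial x_{n-k-1}}=\frac{\partial P_0}{\partial x_{n-k}}=\cdots=\frac{\partial P_{k-1}}{\partial x_{n-1}},$$ i.e. $\partial P_{(k+j)\bmod n}/\partial x_j$ does not depend on $j\in\{0,\dots,n-1\}$.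
   Context: Polar $n$-complex numbers: $u=x_0+h_1x_1+\cdots+h_{n-1}x_{n-1}$, $x_j\in\mathbb{R}$, $h_0=1$, componentwise addition, bilinear multiplication $h_jh_k=h_{(j+k)\bmod n}$. *)

theory Defs
  imports "HOL-Analysis.Analysis"
begin

text \<open>Polar n-complex numbers u = x_0 + h_1 x_1 + ... + h_(n-1) x_(n-1) are represented
  by their component functions x :: nat => real, with x i = 0 for i >= n.
  The carrier is identified with R^n; we use the product topology on nat => real,
  restricted to this carrier (which is the Euclidean topology of R^n).\<close>

definition ncx :: "nat \<Rightarrow> (nat \<Rightarrow> real) set" where
  "ncx n = {x. \<forall>i\<ge>n. x i = 0}"

definition nadd :: "nat \<Rightarrow> (nat \<Rightarrow> real) \<Rightarrow> (nat \<Rightarrow> real) \<Rightarrow> (nat \<Rightarrow> real)" where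
  "nadd n x y = (\<lambda>i. if i < n then x i + y i else 0)"

definition nsub :: "nat \<Rightarrow> (nat \<Rightarrow> real) \<Rightarrow> (nat \<Rightarrow> real) \<Rightarrow> (nat \<Rightarrow> real)" where
  "nsub n x y = (\<lambda>i. if i < n then x i - y i else 0)"

text \<open>Bilinear multiplication with h_j h_l = h_((j+l) mod n).\<close>
definition nmul :: "nat \<Rightarrow> (nat \<Rightarrow> real) \<Rightarrow> (nat \<Rightarrow> real) \<Rightarrow> (nat \<Rightarrow> real)" where
  "nmul n x y = (\<lambda>k. if k < n then
      (\<Sum>j<n. \<Sum>l<n. if (j + l) mod n = k then x j * y l else 0) else 0)"

definition none :: "nat \<Rightarrow> (nat \<Rightarrow> real)" where
  "none n = (\<lambda>i. if i = 0 then 1 else 0)"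

fun npow :: "nat \<Rightarrow> (nat \<Rightarrow> real) \<Rightarrow> nat \<Rightarrow> (nat \<Rightarrow> real)" where
  "npow n u 0 = none n"
| "npow n u (Suc m) = nmul n u (npow n u m)"

definition nnorm :: "nat \<Rightarrow> (nat \<Rightarrow> real) \<Rightarrow> real" where
  "nnorm n x = sqrt (\<Sum>i<n. (x i)\<^sup>2)"

definition pterm :: "nat \<Rightarrow> (nat \<Rightarrow> nat \<Rightarrow> real) \<Rightarrow> (nat \<Rightarrow> real) \<Rightarrow> (nat \<Rightarrow> real) \<Rightarrow> nat \<Rightarrow> (nat \<Rightarrow> real)" where
  "pterm n a u0 u l = nmul n (a l) (npow n (nsub n u u0) l)"

definition Pcomp :: "nat \<Rightarrow> (nat \<Rightarrow> nat \<Rightarrow> real) \<Rightarrow> (nat \<Rightarrow> real) \<Rightarrow> nat \<Rightarrow> (nat \<Rightarrow> real) \<Rightarrow> real" where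
  "Pcomp n a u0 k u = (\<Sum>l. pterm n a u0 u l k)"

end

theory Submission
  imports Defs
begin

(* The maps x |-> sum_i x_i omega^(m i), omega = exp (2 pi i / n), are ring homomorphisms from the
   polar n-complex numbers to C (a discrete Fourier transform), and jointly invertible.  Hence each
   component P_k equals (1/n) sum_m omega^(-m k) g_m(zeta_m), where g_m is an ordinary complex power
   series and zeta_m the m-th transform of u - u_0.  Changing x_j moves zeta_m by omega^(m j), so
   dP_k/dx_j = Re ((1/n) sum_m omega^(m (j - k)) g_m'(zeta_m)), which depends only on k - j mod n. *)

definition unity_root :: "nat \<Rightarrow> complex" where
  "unity_root n = exp (2 * of_real pi * \<i> / of_nat n)"

lemma unity_root_pow: "unity_root n ^ j = exp (2 * of_real pi * \<i> * of_nat j / of_nat n)"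
  unfolding unity_root_def by (simp add: mult_ac flip: exp_of_nat_mult)

lemma unity_root_pow_eq_iff:
  "n > 0 \<Longrightarrow> unity_root n ^ i = unity_root n ^ k \<longleftrightarrow> i mod n = k mod n"
  unfolding unity_root_pow by (rule complex_root_unity_eq) simp

lemma unity_root_pow_mult_mod:
  "n > 0 \<Longrightarrow> unity_root n ^ (m * (i mod n)) = unity_root n ^ (m * i)"
  by (simp add: unity_root_pow_eq_iff mod_mult_right_eq)

lemma norm_unity_root [simp]: "norm (unity_root n) = 1"
  unfolding unity_root_def by (simp add: norm_exp_eq_Re)

lemma unity_root_nonzero [simp]: "unity_root n \<noteq> 0"
  unfolding unity_root_def by simp

lemma sum_powers_root_of_unity:
  fixes z :: complex
  assumes "z ^ n = 1" "z \<noteq> 1"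
  shows "(\<Sum>m<n. z ^ m) = 0"
  using assms by (simp add: geometric_sum)

lemma unity_root_orthogonality:
  assumes "i < n" "k < n"
  shows "(\<Sum>m<n. unity_root n ^ (m * i) * inverse (unity_root n ^ (m * k)))
    = (if i = k then of_nat n else 0)"
proof -
  define z where "z = unity_root n ^ i / unity_root n ^ k"
  have n: "n > 0" using assms by simp
  have "z ^ n = 1"
    using unity_root_pow_eq_iff[OF n, of "n * i" 0] unity_root_pow_eq_iff[OF n, of "n * k" 0]
    by (simp add: z_def power_divide flip: power_mult mult.commute)
  moreover have "z = 1 \<longleftrightarrow> i = k"
    using unity_root_pow_eq_iff[OF n, of i k] assms by (simp add: z_def)
  ultimately have "(\<Sum>m<n. z ^ m) = (if i = k then of_nat n else 0)"
    using sum_powers_root_of_unity[of z n] by auto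
  moreover have "unity_root n ^ (m * i) * inverse (unity_root n ^ (m * k)) = z ^ m" for m
    by (simp add: z_def power_divide divide_inverse power_mult_distrib power_inverse
        flip: power_mult mult.commute)
  ultimately show ?thesis by simp
qed

definition dft :: "nat \<Rightarrow> nat \<Rightarrow> (nat \<Rightarrow> real) \<Rightarrow> complex" where
  "dft n m x = (\<Sum>i<n. of_real (x i) * unity_root n ^ (m * i))"

lemma dft_nmul:
  assumes "n > 0"
  shows "dft n m (nmul n x y) = dft n m x * dft n m y"
proof -
  have "dft n m (nmul n x y)
      = (\<Sum>k<n. \<Sum>j<n. \<Sum>l<n.
          if (j + l) mod n = k then of_real (x j * y l) * unity_root n ^ (m * k) else 0)"
    unfolding dft_def nmul_def
    by (intro sum.cong refl)
      (simp add: sum_distrib_right of_real_sum del: of_real_mult, intro sum.cong refl, simp)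
  also have "\<dots> = (\<Sum>j<n. \<Sum>l<n. \<Sum>k<n.
          if (j + l) mod n = k then of_real (x j * y l) * unity_root n ^ (m * k) else 0)"
    by (subst sum.swap, rule sum.cong[OF refl], rule sum.swap)
  also have "\<dots> = (\<Sum>j<n. \<Sum>l<n. of_real (x j * y l) * unity_root n ^ (m * (j + l)))"
    using assms by (simp add: unity_root_pow_mult_mod)
  also have "\<dots> = dft n m x * dft n m y"
    unfolding dft_def sum_product by (simp add: distrib_left power_add mult_ac)
  finally show ?thesis .
qed

lemma dft_delta:
  "j < n \<Longrightarrow> dft n m (\<lambda>i. if i = j then 1 else 0) = unity_root n ^ (m * j)"
  unfolding dft_def
  by (subst sum.cong[OF refl, of _ _ "\<lambda>i. if i = j then unity_root n ^ (m * j) else 0"]) auto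

lemma dft_none: "n > 0 \<Longrightarrow> dft n m (none n) = 1"
  unfolding none_def using dft_delta[of 0 n m] by simp

lemma dft_npow: "n > 0 \<Longrightarrow> dft n m (npow n x l) = dft n m x ^ l"
  by (induction l) (simp_all add: dft_none dft_nmul)

lemma dft_nsub: "dft n m (nsub n x y) = dft n m x - dft n m y"
  unfolding dft_def nsub_def by (simp add: sum_subtractf algebra_simps)

lemma dft_add_scaled: "dft n m (\<lambda>i. x i + d * v i) = dft n m x + of_real d * dft n m v"
  unfolding dft_def by (simp add: sum.distrib sum_distrib_left algebra_simps)

lemma dft_fun_upd:
  assumes "j < n"
  shows "dft n m (x(j := t)) = dft n m x + of_real (t - x j) * unity_root n ^ (m * j)"
proof -
  have "x(j := t) = (\<lambda>i. x i + (t - x j) * (if i = j then 1 else 0))" by auto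
  then show ?thesis
    using assms by (simp add: dft_add_scaled dft_delta)
qed

lemma dft_inversion:
  assumes "k < n"
  shows "of_real (x k) = (1 / of_nat n) * (\<Sum>m<n. dft n m x * inverse (unity_root n ^ (m * k)))"
proof -
  have "(\<Sum>m<n. dft n m x * inverse (unity_root n ^ (m * k)))
      = (\<Sum>i<n. of_real (x i)
          * (\<Sum>m<n. unity_root n ^ (m * i) * inverse (unity_root n ^ (m * k))))"
    unfolding dft_def sum_distrib_left sum_distrib_right by (subst sum.swap) (simp add: mult_ac)
  also have "\<dots> = of_nat n * of_real (x k)"
    using assms by (simp add: unity_root_orthogonality mult.commute[of "of_real _"] mult_delta_right)
  finally show ?thesis using assms by simp
qed

lemma abs_le_nnorm: "i < n \<Longrightarrow> \<bar>x i\<bar> \<le> nnorm n x"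
  unfolding nnorm_def by (rule real_le_rsqrt) (auto intro: member_le_sum)

lemma norm_dft_le: "norm (dft n m x) \<le> of_nat n * nnorm n x"
proof -
  have "norm (dft n m x) \<le> (\<Sum>i<n. \<bar>x i\<bar>)"
    unfolding dft_def by (rule norm_sum[THEN order_trans]) (simp add: norm_mult norm_power)
  also have "\<dots> \<le> (\<Sum>i<n. nnorm n x)" by (intro sum_mono abs_le_nnorm) simp
  finally show ?thesis by simp
qed

definition dft_powser :: "nat \<Rightarrow> (nat \<Rightarrow> nat \<Rightarrow> real) \<Rightarrow> nat \<Rightarrow> complex \<Rightarrow> complex" where
  "dft_powser n a m \<zeta> = (\<Sum>l. dft n m (a l) * \<zeta> ^ l)"

lemma dft_pterm:
  "n > 0 \<Longrightarrow> dft n m (pterm n a u0 y l) = dft n m (a l) * dft n m (nsub n y u0) ^ l"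
  unfolding pterm_def by (simp add: dft_nmul dft_npow)

lemma summable_norm_dft_pterm:
  assumes "n > 0" "summable (\<lambda>l. nnorm n (pterm n a u0 y l))"
  shows "summable (\<lambda>l. norm (dft n m (pterm n a u0 y l)))"
  by (rule summable_comparison_test'[OF summable_mult[OF assms(2), of "of_nat n"]])
    (simp add: norm_dft_le)

lemma Pcomp_eq_inverse_dft:
  assumes n: "n > 0" and sm: "summable (\<lambda>l. nnorm n (pterm n a u0 y l))" and k: "k < n"
  shows "of_real (Pcomp n a u0 k y)
    = (1 / of_nat n)
      * (\<Sum>m<n. dft_powser n a m (dft n m (nsub n y u0)) * inverse (unity_root n ^ (m * k)))"
proof -
  have "(\<lambda>l. dft n m (pterm n a u0 y l)) sums dft_powser n a m (dft n m (nsub n y u0))" for m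
    using summable_sums[OF summable_norm_cancel[OF summable_norm_dft_pterm[OF n sm]]]
    by (simp add: dft_powser_def dft_pterm[OF n])
  then have "(\<lambda>l. complex_of_real (pterm n a u0 y l k))
      sums ((1 / of_nat n)
        * (\<Sum>m<n. dft_powser n a m (dft n m (nsub n y u0)) * inverse (unity_root n ^ (m * k))))"
    unfolding dft_inversion[OF k] by (intro sums_mult sums_sum sums_mult2)
  moreover have "(\<lambda>l. complex_of_real (pterm n a u0 y l k)) sums of_real (Pcomp n a u0 k y)"
    unfolding Pcomp_def sums_of_real_iff
    by (intro summable_sums summable_comparison_test'[OF sm]) (simp add: abs_le_nnorm k)
  ultimately show ?thesis
    by (rule sums_unique2[symmetric])
qed

lemma eventually_nhds_in_openin:
  fixes p :: "'a::topological_space \<Rightarrow> 'b::topological_space"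
  assumes "openin (top_of_set S) U" "continuous_on UNIV p" "range p \<subseteq> S" "p t0 \<in> U"
  shows "\<forall>\<^sub>F t in nhds t0. p t \<in> U"
proof -
  obtain T where T: "open T" "U = S \<inter> T" using assms(1) unfolding openin_open by blast
  have "open (p -` T)" "t0 \<in> p -` T" using open_vimage[OF T(1) assms(2)] assms(4) T(2) by auto
  then show ?thesis
    by (rule eventually_nhds_in_open[THEN eventually_mono]) (use assms(3) T(2) in auto)
qed

lemma continuous_on_line:
  "continuous_on UNIV (\<lambda>d::real. (\<lambda>i. x i + d * v i) :: nat \<Rightarrow> real)"
  by (intro continuous_on_coordinatewise_then_product continuous_intros)

lemma dft_powser_field_differentiable:
  assumes n: "n > 0" and U: "U \<subseteq> ncx n" "openin (top_of_set (ncx n)) U"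
    and sm: "\<And>y. y \<in> U \<Longrightarrow> summable (\<lambda>l. nnorm n (pterm n a u0 y l))"
    and x: "x \<in> U"
  shows "dft_powser n a m field_differentiable at (dft n m (nsub n x u0))"
proof -
  (* Pushing x slightly away from u0 (along x - u0, or along h_0 if the transform vanishes) stays
     in U and enlarges the modulus of the transform, so z lies inside the disc of convergence. *)
  define z where "z = dft n m (nsub n x u0)"
  define v where "v = (if z \<noteq> 0 then nsub n x u0 else none n)"
  define p where "p d = (\<lambda>i. x i + d * v i)" for d :: real
  have "range p \<subseteq> ncx n"
    using x U(1) n by (auto simp: p_def v_def ncx_def nsub_def none_def)
  then have "\<forall>\<^sub>F d in nhds 0. p d \<in> U"
    using eventually_nhds_in_openin[OF U(2) continuous_on_line] x by (simp add: p_def)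
  then have "\<forall>\<^sub>F d in at_right 0. p d \<in> U"
    unfolding eventually_at_filter by (auto elim: eventually_mono)
  then have "\<forall>\<^sub>F d in at_right 0. d > 0 \<and> p d \<in> U"
    by (rule eventually_conj[OF eventually_at_right_less])
  then obtain d where d: "d > 0" "p d \<in> U"
    using eventually_happens'[OF trivial_limit_at_right_real] by blast
  define w where "w = dft n m (nsub n (p d) u0)"
  have w: "w = z + of_real d * dft n m v"
    by (simp add: w_def z_def p_def dft_nsub dft_add_scaled)
  have "norm z < norm w"
  proof (cases "z = 0")
    case True
    then show ?thesis using d w by (simp add: v_def dft_none[OF n])
  next
    case False
    then have "w = of_real (1 + d) * z" using w by (simp add: v_def z_def algebra_simps)
    moreover have "norm (1 + complex_of_real d) = 1 + d" using d(1) by (simp add: cmod_def)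
    ultimately show ?thesis using False d by (simp add: norm_mult)
  qed
  moreover have "summable (\<lambda>l. dft n m (a l) * w ^ l)"
    using summable_norm_cancel[OF summable_norm_dft_pterm[OF n sm[OF d(2)]]]
    by (simp add: w_def dft_pterm[OF n])
  ultimately have "DERIV (dft_powser n a m) z :> (\<Sum>l. diffs (\<lambda>l. dft n m (a l)) l * z ^ l)"
    unfolding dft_powser_def[abs_def] by (rule termdiffs_strong[rotated])
  then show ?thesis
    unfolding z_def field_differentiable_def by blast
qed

lemma has_real_derivative_Pcomp_fun_upd:
  assumes n: "n > 0" and U: "U \<subseteq> ncx n" "openin (top_of_set (ncx n)) U"
    and sm: "\<And>y. y \<in> U \<Longrightarrow> summable (\<lambda>l. nnorm n (pterm n a u0 y l))"
    and x: "x \<in> U" and j: "j < n" and k: "k < n"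
  shows "((\<lambda>t. Pcomp n a u0 k (x(j := t))) has_real_derivative
      Re ((1 / of_nat n) * (\<Sum>m<n. deriv (dft_powser n a m) (dft n m (nsub n x u0))
        * unity_root n ^ (m * j) * inverse (unity_root n ^ (m * k))))) (at (x j))"
proof -
  define z where "z m = dft n m (nsub n x u0)" for m
  define D where "D = (1 / of_nat n) * (\<Sum>m<n. deriv (dft_powser n a m) (z m)
      * unity_root n ^ (m * j) * inverse (unity_root n ^ (m * k)))"
  define G where "G s = (1 / of_nat n) * (\<Sum>m<n.
      dft_powser n a m (z m + (s - of_real (x j)) * unity_root n ^ (m * j))
      * inverse (unity_root n ^ (m * k)))" for s
  have "DERIV (dft_powser n a m) (z m) :> deriv (dft_powser n a m) (z m)" for m
    using dft_powser_field_differentiable[OF n U sm x]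
    by (simp add: z_def DERIV_deriv_iff_field_differentiable)
  then have "DERIV G (of_real (x j)) :> D"
    unfolding G_def D_def using n
    by (auto intro!: derivative_eq_intros DERIV_chain2[where f = "dft_powser n a _"])
  then have G_deriv: "((\<lambda>t. Re (G (of_real t))) has_real_derivative Re D) (at (x j))"
    by (intro has_field_derivative_Re has_vector_derivative_real_field)
  have "\<forall>\<^sub>F t in nhds (x j). x(j := t) \<in> U"
  proof (rule eventually_nhds_in_openin[OF U(2)])
    show "continuous_on UNIV (\<lambda>t. x(j := t))"
    proof (rule continuous_on_coordinatewise_then_product)
      show "continuous_on UNIV (\<lambda>t. (x(j := t)) i)" for i
        by (cases "i = j") simp_all
    qed
  qed (use x U(1) j in \<open>auto simp: ncx_def\<close>)
  then have G_eq: "\<forall>\<^sub>F t in nhds (x j). Re (G (of_real t)) = Pcomp n a u0 k (x(j := t))"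
  proof (rule eventually_mono)
    fix t assume "x(j := t) \<in> U"
    from Pcomp_eq_inverse_dft[OF n sm[OF this] k]
    have "of_real (Pcomp n a u0 k (x(j := t))) = G (of_real t)"
      by (simp add: G_def z_def dft_nsub dft_fun_upd[OF j] algebra_simps)
    then show "Re (G (of_real t)) = Pcomp n a u0 k (x(j := t))"
      by (metis Re_complex_of_real)
  qed
  show ?thesis
    using G_deriv DERIV_cong_ev[OF refl G_eq refl] by (simp add: D_def z_def)
qed

theorem mainTheorem15:
  fixes n :: nat and a :: "nat \<Rightarrow> nat \<Rightarrow> real" and u0 :: "nat \<Rightarrow> real"
    and U :: "(nat \<Rightarrow> real) set"
  assumes "n \<ge> 2"
    and "\<And>l. a l \<in> ncx n"
    and "u0 \<in> ncx n"
    and "U \<subseteq> ncx n"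
    and "openin (top_of_set (ncx n)) U"
    and "\<And>u. u \<in> U \<Longrightarrow> summable (\<lambda>l. nnorm n (pterm n a u0 u l))"
  shows "\<forall>x\<in>U. \<forall>k<n. \<exists>D. \<forall>j<n.
           ((\<lambda>t. Pcomp n a u0 ((k + j) mod n) (x(j := t))) has_real_derivative D) (at (x j))"
proof (intro ballI allI impI)
  fix x k assume x: "x \<in> U" and k: "k < n"
  have n: "n > 0" using assms(1) by simp
  have shift: "unity_root n ^ (m * j) * inverse (unity_root n ^ (m * ((k + j) mod n)))
      = inverse (unity_root n ^ (m * k))" for m j
    by (simp add: unity_root_pow_mult_mod[OF n] distrib_left power_add)
  define D where "D = Re ((1 / of_nat n) * (\<Sum>m<n. deriv (dft_powser n a m) (dft n m (nsub n x u0))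
      * inverse (unity_root n ^ (m * k))))"
  show "\<exists>D. \<forall>j<n.
      ((\<lambda>t. Pcomp n a u0 ((k + j) mod n) (x(j := t))) has_real_derivative D) (at (x j))"
  proof (intro exI allI impI)
    fix j assume j: "j < n"
    have "(k + j) mod n < n" using n by simp
    from has_real_derivative_Pcomp_fun_upd[OF n assms(4,5,6) x j this]
    show "((\<lambda>t. Pcomp n a u0 ((k + j) mod n) (x(j := t))) has_real_derivative D) (at (x j))"
      unfolding D_def by (simp only: mult.assoc shift)
  qed
qed

end
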